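(* Assume $\cos\theta_{\max}>0$, let $f\in\mathcal H$, $b=-S^\perp T^\perp Sf$, and $K=(S^\perp T^\perp)|_{\mathcal S^\perp}$. Let $x^*\in\mathcal S^\perp$ be the normal (minimal-norm) solution of $Kx=b$. Define $x_0=0$ and $x_m=(I-K)x_{m-1}+b$ for $m\ge1$ (equivalently $x_m=S^\perp T(Sf+x_{m-1})$). Then for all $m\ge0$, $$\|x_m-x^*\|\le(1-\cos^2\theta_{\max})^m\,\|x^*\|.$$
   Context: $\mathcal H$ is a Hilbert space; $\mathcal S,\mathcal T\subseteq\mathcal H$ closed subspaces with orthogonal projectors $S,T$; $S^\perp=I-S$, $T^\perp=I-T$. Angles: for closed subspaces $\mathcal F,\mathcal G$ with orthogonal projectors $P_{\mathcal F},P_{\mathcal G}$, $\hat\Theta(\mathcal F,\mathcal G)=\{\arccos\sigma:\ \sigma\ge0,\ \sigma^2\in\Sigma((P_{\mathcal F}P_{\mathcal G})|_{\mathcal F})\}$ ($\Sigma$ = spectrum), $\Theta(\mathcal F,\mathcal G)=\hat\Theta(\mathcal F,\mathcal G)\cap\hat\Theta(\mathcal G,\mathcal F)$, and $\theta_{\max}=\sup(\Theta(\mathcal S,\mathcal T)\setminus\{\pi/2\})$ with $\sup\emptyset=0$. *)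

theory Defs
  imports "HOL-Analysis.Analysis"
begin

definition closed_subspace :: "'a::real_inner set \<Rightarrow> bool" where
  "closed_subspace V \<longleftrightarrow> subspace V \<and> closed V"

definition orth_proj :: "'a::real_inner set \<Rightarrow> 'a \<Rightarrow> 'a" where
  "orth_proj V x = (THE y. y \<in> V \<and> x - y \<in> orthogonal_comp V)"

definition spectrum_on :: "'a::real_normed_vector set \<Rightarrow> ('a \<Rightarrow> 'a) \<Rightarrow> real set" where
  "spectrum_on F A = {l. \<not> (\<exists>B. (\<forall>x\<in>F. B x \<in> F) \<and>
       (\<exists>C. \<forall>x\<in>F. norm (B x) \<le> C * norm x) \<and>
       (\<forall>x\<in>F. B (A x - l *\<^sub>R x) = x \<and> A (B x) - l *\<^sub>R B x = x))}"

definition hatTheta :: "'a::real_inner set \<Rightarrow> 'a set \<Rightarrow> real set" where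
  "hatTheta F G = {arccos s | s. s \<ge> 0 \<and> s\<^sup>2 \<in> spectrum_on F (\<lambda>x. orth_proj F (orth_proj G x))}"

definition Theta :: "'a::real_inner set \<Rightarrow> 'a set \<Rightarrow> real set" where
  "Theta F G = hatTheta F G \<inter> hatTheta G F"

definition theta_max :: "'a::real_inner set \<Rightarrow> 'a set \<Rightarrow> real" where
  "theta_max S T = (let A = Theta S T - {pi/2} in if A = {} then 0 else Sup A)"

end

theory Submission
  imports Defs
begin

text \<open>
  On \<open>S\<^sup>\<bottom>\<close> the iteration is \<open>x \<mapsto> A x + b\<close> with \<open>A = I - K = S\<^sup>\<bottom> T\<close>, a positive contraction, so
  the error \<open>x\<^sub>m - x\<^sup>*\<close> equals \<open>A\<^sup>m (- x\<^sup>*)\<close>. Jacobson's lemma (\<open>X Y\<close> and \<open>Y X\<close> have the same nonzero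
  spectrum) and the shift \<open>\<sigma> \<mapsto> 1 - \<sigma>\<close> relate the spectrum of \<open>A\<close> to those of \<open>S T S\<close> and \<open>T S T\<close>;
  by the definition of \<open>\<theta>\<^sub>m\<^sub>a\<^sub>x\<close>, \<open>A\<close> then has no spectrum in \<open>(\<lambda>, 1)\<close> with \<open>\<lambda> = 1 - cos\<^sup>2 \<theta>\<^sub>m\<^sub>a\<^sub>x\<close>.
  On the orthogonal complement \<open>W\<close> of the fixed points of \<open>A\<close> the iterates \<open>A\<^sup>k y\<close> tend to \<open>0\<close>;
  together with \<open>(A - t)(A - 1) \<ge> 0\<close> for \<open>t\<close> in the gap this keeps the numerical range of \<open>A\<close> on
  \<open>W\<close> below \<open>1\<close>, and its supremum, an approximate eigenvalue, cannot lie in the gap. So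
  \<open>\<langle>A y, y\<rangle> \<le> \<lambda> \<parallel>y\<parallel>\<^sup>2\<close> and, by Cauchy-Schwarz for \<open>\<langle>A \<cdot>, \<cdot>\<rangle>\<close>, \<open>\<parallel>A y\<parallel> \<le> \<lambda> \<parallel>y\<parallel>\<close> on \<open>W\<close>, which
  contains the minimal-norm solution \<open>x\<^sup>*\<close>.
\<close>

lemma closed_orthogonal_comp: "closed (orthogonal_comp (V::'a::real_inner set))"
proof -
  have "orthogonal_comp V = (\<Inter>y\<in>V. {x. inner y x = 0})"
    by (auto simp: orthogonal_comp_def orthogonal_def)
  moreover have "closed {x. inner y x = (0::real)}" for y :: 'a
    by (intro closed_Collect_eq continuous_intros)
  ultimately show ?thesis by auto
qed

lemma orthogonal_if_norm_le_norm_add_scaleR: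
  fixes y z :: "'a::real_inner"
  assumes min: "\<And>r. norm y \<le> norm (y + r *\<^sub>R z)"
  shows "inner y z = 0"
proof -
  define c where "c = inner y z"
  define N where "N = (norm z)\<^sup>2"
  define r where "r = - c / (N + 1)"
  have N: "N \<ge> 0" by (simp add: N_def)
  have "(norm y)\<^sup>2 \<le> (norm (y + r *\<^sub>R z))\<^sup>2"
    using min by (simp add: power_mono)
  also have "\<dots> = (norm y)\<^sup>2 + r * (2 * c + r * N)"
    unfolding c_def N_def power2_norm_eq_inner
    by (simp add: inner_add_left inner_add_right inner_commute algebra_simps power2_eq_square)
  also have "r * (2 * c + r * N) = - (c\<^sup>2 * (N + 2) / (N + 1)\<^sup>2)"
    using N by (simp add: r_def field_simps power2_eq_square)
  finally have "c\<^sup>2 * (N + 2) \<le> 0"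
    using N by (simp add: divide_le_0_iff)
  then show ?thesis
    using N by (simp add: c_def mult_le_0_iff)
qed

lemma minimizing_sequence_Cauchy:
  fixes V :: "'a::real_inner set"
  assumes "subspace V" and vs: "\<And>n. vs n \<in> V" and d: "\<And>v. v \<in> V \<Longrightarrow> d \<le> norm (x - v)" "0 \<le> d"
    and near_inf: "\<And>n. (norm (x - vs n))\<^sup>2 < d\<^sup>2 + 1 / real (Suc n)"
  shows "Cauchy vs"
proof (rule CauchyI)
  \<comment> \<open>the parallelogram law applied to \<open>x - vs m\<close> and \<open>x - vs n\<close>, with the midpoint in \<open>V\<close>\<close>
  have near: "(norm (vs m - vs n))\<^sup>2 \<le> 2 / real (Suc n) + 2 / real (Suc m)" for m n
  proof -
    have "(1/2) *\<^sub>R (vs n + vs m) \<in> V"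
      using vs \<open>subspace V\<close> by (intro subspace_scale subspace_add) auto
    then have "d\<^sup>2 \<le> (norm (x - (1/2) *\<^sub>R (vs n + vs m)))\<^sup>2"
      using d by (intro power_mono) auto
    moreover have "(norm (vs m - vs n))\<^sup>2 = 2 * (norm (x - vs n))\<^sup>2 + 2 * (norm (x - vs m))\<^sup>2
        - 4 * (norm (x - (1/2) *\<^sub>R (vs n + vs m)))\<^sup>2"
      unfolding power2_norm_eq_inner
      by (simp add: inner_diff_left inner_diff_right inner_add_left inner_add_right
          inner_commute algebra_simps)
    ultimately show ?thesis
      using near_inf[of n] near_inf[of m] by linarith
  qed
  fix e :: real assume e: "0 < e"
  obtain M where "4 / e\<^sup>2 < real M"
    using reals_Archimedean2 by blast
  then have "4 / e\<^sup>2 < real (Suc M)"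
    by simp
  then have M: "4 / real (Suc M) < e\<^sup>2"
    using e by (simp add: field_simps)
  show "\<exists>M. \<forall>m\<ge>M. \<forall>n\<ge>M. norm (vs m - vs n) < e"
  proof (intro exI allI impI)
    fix m n assume "M \<le> m" "M \<le> n"
    then have "2 / real (Suc n) \<le> 2 / real (Suc M)" "2 / real (Suc m) \<le> 2 / real (Suc M)"
      by (auto simp: frac_le)
    then have "(norm (vs m - vs n))\<^sup>2 < e\<^sup>2"
      using near[of m n] M by linarith
    then show "norm (vs m - vs n) < e"
      using e by (simp add: power_less_imp_less_base)
  qed
qed

lemma closed_subspace_nearest_point:
  fixes V :: "'a::{real_inner,complete_space} set"
  assumes "closed_subspace V"
  obtains y where "y \<in> V" and "\<And>v. v \<in> V \<Longrightarrow> norm (x - y) \<le> norm (x - v)"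
proof -
  have sV: "subspace V" and cV: "closed V"
    using assms by (auto simp: closed_subspace_def)
  define D where "D = (\<lambda>v. norm (x - v)) ` V"
  define d where "d = Inf D"
  have D: "D \<noteq> {}" "bdd_below D"
    using subspace_0[OF sV] by (auto simp: D_def intro!: bdd_belowI[of _ 0])
  have d_le: "d \<le> norm (x - v)" if "v \<in> V" for v
    unfolding d_def using that D by (auto simp: D_def intro: cInf_lower)
  have d: "0 \<le> d"
    unfolding d_def using D by (intro cInf_greatest) (auto simp: D_def)
  have "\<exists>v. v \<in> V \<and> (norm (x - v))\<^sup>2 < d\<^sup>2 + 1 / real (Suc n)" for n
  proof -
    have "d < sqrt (d\<^sup>2 + 1 / real (Suc n))"
      using d real_less_rsqrt[of d "d\<^sup>2 + 1 / real (Suc n)"] by simp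
    then obtain v where "v \<in> V" "norm (x - v) < sqrt (d\<^sup>2 + 1 / real (Suc n))"
      using cInf_lessD[OF D(1)] unfolding d_def by (auto simp: D_def)
    moreover have "(norm (x - v))\<^sup>2 < (sqrt (d\<^sup>2 + 1 / real (Suc n)))\<^sup>2"
      using calculation(2) by (intro power_strict_mono) auto
    moreover have "(sqrt (d\<^sup>2 + 1 / real (Suc n)))\<^sup>2 = d\<^sup>2 + 1 / real (Suc n)"
      by (intro real_sqrt_pow2) simp
    ultimately show ?thesis
      by auto
  qed
  then obtain vs where "\<forall>n. vs n \<in> V \<and> (norm (x - vs n))\<^sup>2 < d\<^sup>2 + 1 / real (Suc n)"
    using choice[of "\<lambda>n v. v \<in> V \<and> (norm (x - v))\<^sup>2 < d\<^sup>2 + 1 / real (Suc n)"] by blast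
  then have vs: "\<And>n. vs n \<in> V" "\<And>n. (norm (x - vs n))\<^sup>2 < d\<^sup>2 + 1 / real (Suc n)"
    by auto
  obtain y where lim: "vs \<longlonglongrightarrow> y"
    using minimizing_sequence_Cauchy[OF sV vs(1) d_le d vs(2)]
    by (auto simp: Cauchy_convergent_iff convergent_def)
  have "y \<in> V"
    using closed_sequentially[OF cV _ lim] vs(1) by auto
  moreover have "(norm (x - y))\<^sup>2 \<le> d\<^sup>2 + 0"
  proof (rule LIMSEQ_le)
    show "(\<lambda>n. (norm (x - vs n))\<^sup>2) \<longlonglongrightarrow> (norm (x - y))\<^sup>2"
      by (intro tendsto_power tendsto_norm tendsto_diff tendsto_const lim)
    show "(\<lambda>n. d\<^sup>2 + 1 / real (Suc n)) \<longlonglongrightarrow> d\<^sup>2 + 0"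
      using LIMSEQ_inverse_real_of_nat by (intro tendsto_add tendsto_const) (simp add: inverse_eq_divide)
    show "\<exists>N. \<forall>n\<ge>N. (norm (x - vs n))\<^sup>2 \<le> d\<^sup>2 + 1 / real (Suc n)"
      using vs(2) less_imp_le by auto
  qed
  then have "norm (x - y) \<le> d"
    using d by (auto intro: power2_le_imp_le)
  ultimately show ?thesis
    using that d_le by force
qed

lemma orth_proj_exists:
  fixes V :: "'a::{real_inner,complete_space} set"
  assumes "closed_subspace V"
  shows "\<exists>y. y \<in> V \<and> x - y \<in> orthogonal_comp V"
proof -
  have sV: "subspace V"
    using assms by (simp add: closed_subspace_def)
  obtain y where y: "y \<in> V" "\<And>v. v \<in> V \<Longrightarrow> norm (x - y) \<le> norm (x - v)"
    using closed_subspace_nearest_point[OF assms] by blast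
  have "inner (x - y) w = 0" if "w \<in> V" for w
  proof (rule orthogonal_if_norm_le_norm_add_scaleR)
    fix r :: real
    have "y - r *\<^sub>R w \<in> V"
      using y(1) that sV by (intro subspace_diff subspace_scale)
    moreover have "x - (y - r *\<^sub>R w) = x - y + r *\<^sub>R w"
      by simp
    ultimately show "norm (x - y) \<le> norm (x - y + r *\<^sub>R w)"
      using y(2) by metis
  qed
  then show ?thesis
    using y(1) by (auto simp: orthogonal_comp_def orthogonal_def inner_commute)
qed

lemma orth_proj_unique:
  fixes V :: "'a::real_inner set"
  assumes "subspace V" "y \<in> V" "x - y \<in> orthogonal_comp V" "y' \<in> V" "x - y' \<in> orthogonal_comp V"
  shows "y = y'"
proof -
  have "y - y' \<in> V"
    using assms by (simp add: subspace_diff)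
  moreover have "y - y' \<in> orthogonal_comp V"
    using subspace_diff[OF subspace_orthogonal_comp assms(5,3)] by simp
  ultimately have "inner (y - y') (y - y') = 0"
    by (auto simp: orthogonal_comp_def orthogonal_def)
  then show ?thesis by simp
qed

lemma orth_proj_eqI:
  fixes V :: "'a::{real_inner,complete_space} set"
  assumes "closed_subspace V" "y \<in> V" "x - y \<in> orthogonal_comp V"
  shows "orth_proj V x = y"
  using assms orth_proj_exists[OF assms(1), of x] orth_proj_unique[of V]
  unfolding orth_proj_def closed_subspace_def by (intro the_equality) blast+

locale orth_projector =
  fixes V :: "'a::{real_inner,complete_space} set"
  assumes closed_subspace: "closed_subspace V"
begin

lemma subspace: "subspace V"
  using closed_subspace by (simp add: closed_subspace_def)

lemma in_subspace: "orth_proj V x \<in> V"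
  and residual_orthogonal: "x - orth_proj V x \<in> orthogonal_comp V"
  using orth_proj_exists[OF closed_subspace, of x] orth_proj_eqI[OF closed_subspace] by metis+

lemma eq_self: "v \<in> V \<Longrightarrow> orth_proj V v = v"
  by (rule orth_proj_eqI[OF closed_subspace]) (auto simp: orthogonal_comp_def orthogonal_def)

lemma eq_0: "z \<in> orthogonal_comp V \<Longrightarrow> orth_proj V z = 0"
  by (rule orth_proj_eqI[OF closed_subspace]) (auto simp: subspace subspace_0)

lemma idem: "orth_proj V (orth_proj V x) = orth_proj V x"
  by (simp add: eq_self in_subspace)

lemma linear: "linear (orth_proj V)"
proof (rule linearI)
  fix x y :: 'a and c :: real
  have "x + y - (orth_proj V x + orth_proj V y) = (x - orth_proj V x) + (y - orth_proj V y)"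
    by simp
  then show "orth_proj V (x + y) = orth_proj V x + orth_proj V y"
    using residual_orthogonal in_subspace subspace subspace_orthogonal_comp
    by (metis orth_proj_eqI[OF closed_subspace] subspace_add)
  have "c *\<^sub>R x - c *\<^sub>R orth_proj V x = c *\<^sub>R (x - orth_proj V x)"
    by (simp add: algebra_simps)
  then show "orth_proj V (c *\<^sub>R x) = c *\<^sub>R orth_proj V x"
    using residual_orthogonal in_subspace subspace subspace_orthogonal_comp
    by (metis orth_proj_eqI[OF closed_subspace] subspace_scale)
qed

lemma diff: "orth_proj V (x - y) = orth_proj V x - orth_proj V y"
  using linear_diff[OF linear] .

lemma pythagoras: "(norm x)\<^sup>2 = (norm (orth_proj V x))\<^sup>2 + (norm (x - orth_proj V x))\<^sup>2"
proof -
  have "inner (orth_proj V x) (x - orth_proj V x) = 0"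
    using residual_orthogonal in_subspace by (auto simp: orthogonal_comp_def orthogonal_def)
  then show ?thesis
    by (simp add: power2_norm_eq_inner inner_diff_left inner_diff_right inner_commute)
qed

lemma norm_le: "norm (orth_proj V x) \<le> norm x"
  and norm_residual_le: "norm (x - orth_proj V x) \<le> norm x"
  using pythagoras[of x] by (auto intro: power2_le_imp_le)

lemma bounded_linear: "bounded_linear (orth_proj V)"
  using linear norm_le by (intro bounded_linear_intro[where K=1]) (simp_all add: linear_add linear_scale)

lemma bounded_linear_residual: "bounded_linear (\<lambda>x. x - orth_proj V x)"
  by (intro bounded_linear_sub bounded_linear_ident bounded_linear)

lemma self_adjoint: "inner (orth_proj V x) y = inner x (orth_proj V y)"
proof -
  have "inner (orth_proj V x) (y - orth_proj V y) = 0" "inner (x - orth_proj V x) (orth_proj V y) = 0"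
    using residual_orthogonal in_subspace
    by (auto simp: orthogonal_comp_def orthogonal_def inner_commute)
  then show ?thesis
    by (simp add: inner_diff_left inner_diff_right)
qed

lemma inner_self: "inner (orth_proj V x) x = (norm (orth_proj V x))\<^sup>2"
  using self_adjoint[of "orth_proj V x" x] by (simp add: idem power2_norm_eq_inner)

end

lemma notin_spectrum_on_iff:
  "l \<notin> spectrum_on F M \<longleftrightarrow> (\<exists>B. (\<forall>x\<in>F. B x \<in> F) \<and> (\<exists>C. \<forall>x\<in>F. norm (B x) \<le> C * norm x) \<and>
     (\<forall>x\<in>F. B (M x - l *\<^sub>R x) = x \<and> M (B x) - l *\<^sub>R B x = x))"
  by (simp add: spectrum_on_def)

lemma notin_spectrum_on_cong:
  assumes "\<And>x. x \<in> F \<Longrightarrow> M x = M' x" "l \<notin> spectrum_on F M"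
  shows "l \<notin> spectrum_on F M'"
  using assms(2) unfolding notin_spectrum_on_iff by (metis assms(1))

lemma notin_spectrum_on_one_minus:
  assumes "subspace F" "l \<notin> spectrum_on F M"
  shows "1 - l \<notin> spectrum_on F (\<lambda>x. x - M x)"
proof -
  obtain B C where B: "\<forall>x\<in>F. B x \<in> F" "\<forall>x\<in>F. norm (B x) \<le> C * norm x"
    "\<forall>x\<in>F. B (M x - l *\<^sub>R x) = x \<and> M (B x) - l *\<^sub>R B x = x"
    using assms(2) unfolding notin_spectrum_on_iff by blast
  have neg: "- x \<in> F" if "x \<in> F" for x
    using assms(1) that by (simp add: subspace_neg)
  have "B (- (x - M x - (1 - l) *\<^sub>R x)) = x" if "x \<in> F" for x
    using B(3) that by (simp add: algebra_simps)
  moreover have "B (- x) - M (B (- x)) - (1 - l) *\<^sub>R B (- x) = x" if "x \<in> F" for x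
    using B(3) neg[OF that] by (simp add: algebra_simps)
  moreover have "\<forall>x\<in>F. norm (B (- x)) \<le> C * norm x"
    using B(2) neg by fastforce
  ultimately show ?thesis
    unfolding notin_spectrum_on_iff using B(1) neg by (intro exI[of _ "\<lambda>x. B (- x)"]) auto
qed

lemma notin_spectrum_on_bounded_below:
  assumes "l \<notin> spectrum_on F M" "\<And>x. x \<in> F \<Longrightarrow> M x - l *\<^sub>R x \<in> F"
  shows "\<exists>C>0. \<forall>x\<in>F. norm x \<le> C * norm (M x - l *\<^sub>R x)"
proof -
  obtain B C where B: "\<forall>x\<in>F. norm (B x) \<le> C * norm x"
    "\<forall>x\<in>F. B (M x - l *\<^sub>R x) = x"
    using assms(1) unfolding notin_spectrum_on_iff by blast
  have "norm x \<le> (max C 0 + 1) * norm (M x - l *\<^sub>R x)" if "x \<in> F" for x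
  proof -
    have "norm x = norm (B (M x - l *\<^sub>R x))"
      using B(2) that by simp
    also have "\<dots> \<le> C * norm (M x - l *\<^sub>R x)"
      using B(1) assms(2) that by blast
    also have "\<dots> \<le> (max C 0 + 1) * norm (M x - l *\<^sub>R x)"
      by (intro mult_right_mono) auto
    finally show ?thesis .
  qed
  then show ?thesis
    by (intro exI[of _ "max C 0 + 1"]) auto
qed

text \<open>Jacobson's lemma: if \<open>R\<close> inverts \<open>Y X - \<sigma>\<close>, then \<open>(X R Y - 1) / \<sigma>\<close> inverts \<open>X Y - \<sigma>\<close>.\<close>
lemma notin_spectrum_on_swap:
  assumes "subspace U" and XV: "\<And>v. v \<in> V \<Longrightarrow> X v \<in> U" and YU: "\<And>u. u \<in> U \<Longrightarrow> Y u \<in> V"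
    and bX: "bounded_linear X" and bY: "bounded_linear Y" and "\<sigma> \<noteq> 0"
    and "\<sigma> \<notin> spectrum_on V (\<lambda>v. Y (X v))"
  shows "\<sigma> \<notin> spectrum_on U (\<lambda>u. X (Y u))"
proof -
  obtain R C where R: "\<forall>x\<in>V. R x \<in> V" "\<forall>x\<in>V. norm (R x) \<le> C * norm x"
    "\<forall>x\<in>V. R (Y (X x) - \<sigma> *\<^sub>R x) = x \<and> Y (X (R x)) - \<sigma> *\<^sub>R R x = x"
    using assms(7) unfolding notin_spectrum_on_iff by blast
  interpret X: bounded_linear X by (rule bX)
  interpret Y: bounded_linear Y by (rule bY)
  obtain KX where KX: "\<And>x. norm (X x) \<le> norm x * KX" "KX > 0"
    using X.pos_bounded by blast
  obtain KY where KY: "\<And>x. norm (Y x) \<le> norm x * KY" "KY > 0"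
    using Y.pos_bounded by blast
  define B where "B = (\<lambda>u. (1 / \<sigma>) *\<^sub>R (X (R (Y u)) - u))"
  have "B u \<in> U" if "u \<in> U" for u
    unfolding B_def using assms(1) XV YU R(1) that by (intro subspace_scale subspace_diff) auto
  moreover have "B (X (Y u) - \<sigma> *\<^sub>R u) = u" if "u \<in> U" for u
  proof -
    have "R (Y (X (Y u)) - \<sigma> *\<^sub>R Y u) = Y u"
      using R(3) YU that by simp
    then show ?thesis
      unfolding B_def using \<open>\<sigma> \<noteq> 0\<close> by (simp add: X.diff Y.diff Y.scaleR algebra_simps)
  qed
  moreover have "X (Y (B u)) - \<sigma> *\<^sub>R B u = u" if "u \<in> U" for u
  proof -
    have "Y (X (R (Y u))) - \<sigma> *\<^sub>R R (Y u) = Y u"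
      using R(3) YU that by simp
    then have "Y (B u) = R (Y u)"
      unfolding B_def using \<open>\<sigma> \<noteq> 0\<close> by (simp add: Y.diff Y.scaleR algebra_simps)
    then show ?thesis
      unfolding B_def using \<open>\<sigma> \<noteq> 0\<close> by (simp add: algebra_simps)
  qed
  moreover have "norm (B u) \<le> (1 / \<bar>\<sigma>\<bar>) * (KX * max C 0 * KY + 1) * norm u" if "u \<in> U" for u
  proof -
    have "norm (R (Y u)) \<le> max C 0 * (norm u * KY)"
      using R(2) YU[OF that] KY
      by (meson max.cobounded1 mult_left_mono mult_right_mono norm_ge_zero order_trans max.cobounded2)
    then have "norm (X (R (Y u))) \<le> max C 0 * (norm u * KY) * KX"
      using KX by (meson less_imp_le mult_right_mono order_trans)
    then have "norm (X (R (Y u)) - u) \<le> (KX * max C 0 * KY + 1) * norm u"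
      using norm_triangle_ineq4[of "X (R (Y u))" u] by (simp add: algebra_simps)
    moreover have "norm (B u) = (1 / \<bar>\<sigma>\<bar>) * norm (X (R (Y u)) - u)"
      by (simp add: B_def)
    ultimately show ?thesis
      by (simp add: divide_right_mono)
  qed
  ultimately show ?thesis
    unfolding notin_spectrum_on_iff by (intro exI[of _ B]) blast
qed

text \<open>The solution is the fixed point of the contraction \<open>z \<mapsto> (M z - y) / l\<close>.\<close>
lemma contraction_minus_scaleR_unique_solution:
  fixes M :: "'a::{real_inner,complete_space} \<Rightarrow> 'a"
  assumes "closed_subspace F" and "linear M" and MF: "\<And>x. x \<in> F \<Longrightarrow> M x \<in> F"
    and nM: "\<And>x. norm (M x) \<le> norm x" and "l > 1" and "y \<in> F"
  shows "\<exists>!z\<in>F. M z - l *\<^sub>R z = y"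
proof -
  have sF: "subspace F" and cF: "closed F"
    using assms(1) by (auto simp: closed_subspace_def)
  interpret M: linear M by (rule assms(2))
  define g where "g = (\<lambda>z. (1 / l) *\<^sub>R (M z - y))"
  have g_iff: "g z = z \<longleftrightarrow> M z - l *\<^sub>R z = y" for z
  proof
    assume "g z = z"
    then have "l *\<^sub>R g z = l *\<^sub>R z"
      by simp
    then show "M z - l *\<^sub>R z = y"
      using \<open>l > 1\<close> by (simp add: g_def algebra_simps)
  qed (use \<open>l > 1\<close> in \<open>auto simp: g_def\<close>)
  have "\<exists>!z\<in>F. g z = z"
  proof (rule Banach_fix[where c="1 / l"])
    show "complete F" using cF by (simp add: complete_eq_closed)
    show "F \<noteq> {}" using sF subspace_0 by blast
    show "0 \<le> 1 / l" "1 / l < 1" using \<open>l > 1\<close> by auto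
    show "g ` F \<subseteq> F"
      using MF \<open>y \<in> F\<close> sF by (auto simp: g_def intro!: subspace_scale subspace_diff)
    fix z w assume "z \<in> F" "w \<in> F"
    have "dist (g z) (g w) = (1 / l) * norm (M (z - w))"
      using \<open>l > 1\<close> by (simp add: g_def dist_norm M.diff algebra_simps flip: scaleR_diff_right)
    also have "\<dots> \<le> (1 / l) * dist z w"
      using \<open>l > 1\<close> nM by (intro mult_left_mono) (auto simp: dist_norm)
    finally show "dist (g z) (g w) \<le> 1 / l * dist z w" .
  qed
  then show ?thesis
    by (simp add: g_iff)
qed

lemma notin_spectrum_on_gt_1:
  fixes M :: "'a::{real_inner,complete_space} \<Rightarrow> 'a"
  assumes "closed_subspace F" and "linear M" and MF: "\<And>x. x \<in> F \<Longrightarrow> M x \<in> F"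
    and nM: "\<And>x. norm (M x) \<le> norm x" and "l > 1"
  shows "l \<notin> spectrum_on F M"
proof -
  have unique: "\<exists>!z\<in>F. M z - l *\<^sub>R z = y" if "y \<in> F" for y
    by (rule contraction_minus_scaleR_unique_solution) (use assms that in auto)
  define B where "B = (\<lambda>y. THE z. z \<in> F \<and> M z - l *\<^sub>R z = y)"
  have B: "B y \<in> F" "M (B y) - l *\<^sub>R B y = y" if "y \<in> F" for y
    unfolding B_def using theI'[OF unique[OF that]] by blast+
  have "B (M x - l *\<^sub>R x) = x" if "x \<in> F" for x
  proof -
    have "M x - l *\<^sub>R x \<in> F"
      using that MF assms(1) by (auto simp: closed_subspace_def intro!: subspace_scale subspace_diff)
    then show ?thesis
      using unique B that by metis
  qed
  moreover have "norm (B y) \<le> 1 / (l - 1) * norm y" if "y \<in> F" for y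
  proof -
    have "l * norm (B y) = norm (M (B y) - y)"
      using B(2)[OF that] \<open>l > 1\<close> by (metis abs_of_pos add_diff_cancel_left' diff_add_cancel
          less_trans norm_scaleR zero_less_one)
    also have "\<dots> \<le> norm (B y) + norm y"
      using nM[of "B y"] norm_triangle_ineq4[of "M (B y)" y] by linarith
    finally show ?thesis
      using \<open>l > 1\<close> by (simp add: field_simps)
  qed
  ultimately show ?thesis
    unfolding notin_spectrum_on_iff using B by (intro exI[of _ B]) blast
qed

definition numerical_sup :: "'a::real_inner set \<Rightarrow> ('a \<Rightarrow> 'a) \<Rightarrow> real" where
  "numerical_sup F M = Sup {inner (M w) w | w. w \<in> F \<and> norm w = 1}"

definition approx_eigenvalue :: "'a::real_normed_vector set \<Rightarrow> ('a \<Rightarrow> 'a) \<Rightarrow> real \<Rightarrow> bool" where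
  "approx_eigenvalue F M l \<longleftrightarrow> (\<forall>e>0. \<exists>w\<in>F. norm w = 1 \<and> norm (M w - l *\<^sub>R w) < e)"

lemma approx_eigenvalue_mono:
  "F \<subseteq> G \<Longrightarrow> approx_eigenvalue F M l \<Longrightarrow> approx_eigenvalue G M l"
  unfolding approx_eigenvalue_def by blast

lemma approx_eigenvalue_in_spectrum_on:
  assumes "approx_eigenvalue F M l" "\<And>x. x \<in> F \<Longrightarrow> M x - l *\<^sub>R x \<in> F"
  shows "l \<in> spectrum_on F M"
proof (rule ccontr)
  assume "l \<notin> spectrum_on F M"
  then obtain C where C: "C > 0" "\<forall>x\<in>F. norm x \<le> C * norm (M x - l *\<^sub>R x)"
    using notin_spectrum_on_bounded_below assms(2) by blast
  obtain w where "w \<in> F" "norm w = 1" "norm (M w - l *\<^sub>R w) < 1 / C"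
    using assms(1) \<open>C > 0\<close> unfolding approx_eigenvalue_def by (meson divide_pos_pos zero_less_one)
  then show False
    using C by (metis less_divide_eq mult.commute not_le)
qed

locale bounded_symmetric_on =
  fixes F :: "'a::real_inner set" and M :: "'a \<Rightarrow> 'a"
  assumes subspace: "subspace F"
    and maps_to: "x \<in> F \<Longrightarrow> M x \<in> F"
    and add: "x \<in> F \<Longrightarrow> y \<in> F \<Longrightarrow> M (x + y) = M x + M y"
    and scale: "x \<in> F \<Longrightarrow> M (c *\<^sub>R x) = c *\<^sub>R M x"
    and symmetric: "x \<in> F \<Longrightarrow> y \<in> F \<Longrightarrow> inner (M x) y = inner x (M y)"
    and bounded: "\<exists>K. \<forall>x\<in>F. norm (M x) \<le> K * norm x"
begin

lemma zero: "M 0 = 0"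
  using scale[of 0 0] subspace_0[OF subspace] by simp

lemma diff: "x \<in> F \<Longrightarrow> y \<in> F \<Longrightarrow> M (x - y) = M x - M y"
  using add[of x "(-1) *\<^sub>R y"] scale[of y "-1"] subspace by (simp add: subspace_neg)

lemma shift_closed: "x \<in> F \<Longrightarrow> M x - t *\<^sub>R x \<in> F"
  using maps_to subspace by (simp add: subspace_diff subspace_scale)

lemma shift_bounded: "\<exists>D>0. \<forall>z\<in>F. norm (M z - t *\<^sub>R z) \<le> D * norm z"
proof -
  obtain K where K: "\<forall>x\<in>F. norm (M x) \<le> K * norm x"
    using bounded by blast
  have "norm (M z - t *\<^sub>R z) \<le> (\<bar>K\<bar> + \<bar>t\<bar> + 1) * norm z" if "z \<in> F" for z
    using norm_triangle_ineq4[of "M z" "t *\<^sub>R z"] K that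
    by (smt (verit, best) abs_ge_self mult_right_mono norm_ge_zero norm_scaleR distrib_right)
  then show ?thesis
    by (intro exI[of _ "\<bar>K\<bar> + \<bar>t\<bar> + 1"]) (auto simp: add_pos_nonneg)
qed

lemma shift: "bounded_symmetric_on F (\<lambda>x. a *\<^sub>R x - M x)"
proof unfold_locales
  show "\<exists>K. \<forall>x\<in>F. norm (a *\<^sub>R x - M x) \<le> K * norm x"
    using shift_bounded[of a] by (metis norm_minus_commute)
qed (use subspace maps_to add scale symmetric in
      \<open>auto simp: subspace_diff subspace_scale algebra_simps inner_diff_left inner_diff_right\<close>)

lemma cauchy_schwarz:
  assumes pos: "\<And>z. z \<in> F \<Longrightarrow> 0 \<le> inner (M z) z" and "x \<in> F" "y \<in> F"
  shows "(inner (M x) y)\<^sup>2 \<le> inner (M x) x * inner (M y) y"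
proof -
  define a b c where "a = inner (M x) x" and "b = inner (M x) y" and "c = inner (M y) y"
  have quad: "0 \<le> a + 2 * r * b + r\<^sup>2 * c" for r
  proof -
    have "x + r *\<^sub>R y \<in> F"
      using assms subspace by (simp add: subspace_add subspace_scale)
    then have "0 \<le> inner (M (x + r *\<^sub>R y)) (x + r *\<^sub>R y)"
      by (rule pos)
    also have "\<dots> = a + 2 * r * b + r\<^sup>2 * c"
      using assms symmetric[of y x] subspace
      by (simp add: add scale subspace_scale a_def b_def c_def inner_add_left inner_add_right
          inner_commute power2_eq_square algebra_simps)
    finally show ?thesis .
  qed
  show ?thesis
  proof (cases "c = 0")
    case True
    have "b = 0"
    proof (rule ccontr)
      assume "b \<noteq> 0"
      then show False
        using quad[of "- (a + 1) / (2 * b)"] True by (simp add: field_simps)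
    qed
    then show ?thesis
      using True unfolding a_def[symmetric] b_def[symmetric] c_def[symmetric] by simp
  next
    case False
    then have "c > 0"
      using pos[OF \<open>y \<in> F\<close>] by (simp add: c_def)
    have "0 \<le> a + 2 * (- b / c) * b + (- b / c)\<^sup>2 * c"
      by (rule quad)
    also have "\<dots> = (a * c - b\<^sup>2) / c"
      using \<open>c > 0\<close> by (simp add: power2_eq_square field_simps)
    finally show ?thesis
      using \<open>c > 0\<close> by (simp add: a_def b_def c_def zero_le_divide_iff mult.commute)
  qed
qed

lemma norm_sq_le_mult_inner:
  assumes pos: "\<And>z. z \<in> F \<Longrightarrow> 0 \<le> inner (M z) z"
    and K: "\<And>z. z \<in> F \<Longrightarrow> norm (M z) \<le> K * norm z" and "x \<in> F"
  shows "(norm (M x))\<^sup>2 \<le> K * inner (M x) x"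
proof (cases "M x = 0")
  case False
  have Mx: "M x \<in> F"
    using maps_to assms(3) .
  have "((norm (M x))\<^sup>2)\<^sup>2 = (inner (M x) (M x))\<^sup>2"
    by (simp add: power2_norm_eq_inner)
  also have "\<dots> \<le> inner (M x) x * inner (M (M x)) (M x)"
    using cauchy_schwarz[OF pos assms(3) Mx] by simp
  also have "inner (M (M x)) (M x) \<le> K * (norm (M x))\<^sup>2"
    using norm_cauchy_schwarz[of "M (M x)" "M x"] K[OF Mx]
    by (smt (verit) mult_right_mono norm_ge_zero power2_eq_square mult.assoc)
  finally have "(norm (M x))\<^sup>2 * (norm (M x))\<^sup>2 \<le> (K * inner (M x) x) * (norm (M x))\<^sup>2"
    using pos[OF assms(3)] by (smt (verit) mult_left_mono mult.commute mult.left_commute power2_eq_square)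
  moreover have "(norm (M x))\<^sup>2 > 0"
    using False by simp
  ultimately show ?thesis
    by (rule mult_right_le_imp_le)
qed (use pos in simp)

lemma inner_le_numerical_sup:
  assumes "w \<in> F"
  shows "inner (M w) w \<le> numerical_sup F M * (norm w)\<^sup>2"
proof (cases "w = 0")
  case False
  obtain K where K: "\<forall>x\<in>F. norm (M x) \<le> K * norm x"
    using bounded by blast
  have "bdd_above {inner (M w) w | w. w \<in> F \<and> norm w = 1}"
  proof (rule bdd_aboveI[of _ K])
    fix r assume "r \<in> {inner (M w) w | w. w \<in> F \<and> norm w = 1}"
    then obtain u where "u \<in> F" "norm u = 1" "r = inner (M u) u"
      by blast
    then show "r \<le> K"
      using norm_cauchy_schwarz[of "M u" u] K by force
  qed
  moreover define u where "u = (1 / norm w) *\<^sub>R w"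
  have "u \<in> F" "norm u = 1"
    using assms False subspace by (simp_all add: u_def subspace_scale)
  ultimately have "inner (M u) u \<le> numerical_sup F M"
    unfolding numerical_sup_def by (blast intro: cSup_upper)
  moreover have "inner (M u) u = inner (M w) w / (norm w)\<^sup>2"
    using scale assms by (simp add: u_def power2_eq_square)
  ultimately show ?thesis
    using False by (simp add: field_simps)
qed (simp add: zero)

lemma numerical_sup_approx:
  assumes "y \<in> F" "y \<noteq> 0" "\<delta> > 0"
  shows "\<exists>w\<in>F. norm w = 1 \<and> numerical_sup F M - \<delta> < inner (M w) w"
proof -
  let ?X = "{inner (M w) w | w. w \<in> F \<and> norm w = 1}"
  have "(1 / norm y) *\<^sub>R y \<in> F"
    using assms subspace by (simp add: subspace_scale)
  then have "?X \<noteq> {}"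
    using assms by force
  moreover have "bdd_above ?X"
  proof (rule bdd_aboveI)
    fix r assume "r \<in> ?X"
    then obtain w where "w \<in> F" "norm w = 1" "r = inner (M w) w"
      by blast
    then show "r \<le> numerical_sup F M"
      using inner_le_numerical_sup[of w] by simp
  qed
  ultimately show ?thesis
    using less_cSup_iff[of ?X "numerical_sup F M - \<delta>"] assms(3)
    unfolding numerical_sup_def by force
qed

text \<open>\<open>N = \<nu> - M\<close> is positive, so \<open>\<parallel>N w\<parallel>\<^sup>2 \<le> D \<langle>N w, w\<rangle>\<close>, and \<open>\<langle>N w, w\<rangle>\<close> is small for suitable
  unit vectors \<open>w\<close>.\<close>
lemma approx_eigenvalue_numerical_sup:
  assumes "y \<in> F" "y \<noteq> 0"
  shows "approx_eigenvalue F M (numerical_sup F M)"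
  unfolding approx_eigenvalue_def
proof (intro allI impI)
  fix e :: real assume "e > 0"
  define \<nu> where "\<nu> = numerical_sup F M"
  define N where "N = (\<lambda>x. \<nu> *\<^sub>R x - M x)"
  interpret N: bounded_symmetric_on F N
    unfolding N_def by (rule shift)
  obtain D where "D > 0" and N_bound: "\<And>z. z \<in> F \<Longrightarrow> norm (N z) \<le> D * norm z"
    using shift_bounded[of \<nu>] by (metis N_def norm_minus_commute)
  have N_pos: "0 \<le> inner (N z) z" if "z \<in> F" for z
    using inner_le_numerical_sup[OF that] by (simp add: N_def \<nu>_def inner_diff_left power2_norm_eq_inner)
  have "e\<^sup>2 / D > 0"
    using \<open>e > 0\<close> \<open>D > 0\<close> by simp
  then obtain w where w: "w \<in> F" "norm w = 1" "\<nu> - e\<^sup>2 / D < inner (M w) w"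
    using numerical_sup_approx[OF assms] unfolding \<nu>_def by blast
  have "inner (N w) w = \<nu> - inner (M w) w"
    using w(2) by (simp add: N_def inner_diff_left power2_norm_eq_inner[symmetric])
  then have "(norm (N w))\<^sup>2 < e\<^sup>2"
    using N.norm_sq_le_mult_inner[OF N_pos N_bound w(1)] w(3) \<open>D > 0\<close>
    by (smt (verit, best) mult.commute pos_less_divide_eq)
  then have "norm (M w - \<nu> *\<^sub>R w) < e"
    using \<open>e > 0\<close> by (simp add: N_def norm_minus_commute power_less_imp_less_base)
  then show "\<exists>w\<in>F. norm w = 1 \<and> norm (M w - numerical_sup F M *\<^sub>R w) < e"
    using w by (auto simp: \<nu>_def)
qed

lemma resolvent:
  assumes "t \<notin> spectrum_on F M"
  obtains B where "bounded_symmetric_on F B"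
    and "\<And>x. x \<in> F \<Longrightarrow> B (M x - t *\<^sub>R x) = x" and "\<And>x. x \<in> F \<Longrightarrow> M (B x) - t *\<^sub>R B x = x"
proof -
  obtain B where BF: "\<forall>x\<in>F. B x \<in> F" and B_bound: "\<exists>C. \<forall>x\<in>F. norm (B x) \<le> C * norm x"
    and inv: "\<forall>x\<in>F. B (M x - t *\<^sub>R x) = x \<and> M (B x) - t *\<^sub>R B x = x"
    using assms unfolding notin_spectrum_on_iff by blast
  have B_eq: "B y = x" if "x \<in> F" "y = M x - t *\<^sub>R x" for x y
    using inv that by blast
  have "bounded_symmetric_on F B"
  proof unfold_locales
    fix x y assume "x \<in> F" "y \<in> F"
    then show "B (x + y) = B x + B y"
      using inv BF subspace by (intro B_eq) (simp_all add: subspace_add add scale algebra_simps)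
    have "inner (B x) y = inner (B x) (M (B y) - t *\<^sub>R B y)"
      using inv \<open>y \<in> F\<close> by simp
    also have "\<dots> = inner (M (B x) - t *\<^sub>R B x) (B y)"
      using symmetric BF \<open>x \<in> F\<close> \<open>y \<in> F\<close> by (simp add: inner_diff_left inner_diff_right)
    finally show "inner (B x) y = inner x (B y)"
      using inv \<open>x \<in> F\<close> by simp
  next
    fix x c assume "x \<in> F"
    then show "B (c *\<^sub>R x) = c *\<^sub>R B x"
      using inv BF subspace by (intro B_eq) (simp_all add: subspace_scale scale algebra_simps)
  qed (use subspace BF B_bound in auto)
  then show ?thesis
    using that inv by blast
qed

lemma approx_eigenvalue_of_resolvent:
  assumes BF: "\<And>x. x \<in> F \<Longrightarrow> B x \<in> F" and inv: "\<And>x. x \<in> F \<Longrightarrow> M (B x) - t *\<^sub>R B x = x"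
    and B: "approx_eigenvalue F B \<nu>" and "\<nu> \<noteq> 0"
  shows "approx_eigenvalue F M (t + 1 / \<nu>)"
  unfolding approx_eigenvalue_def
proof (intro allI impI)
  fix e :: real assume "e > 0"
  obtain D where D: "D > 0" "\<forall>z\<in>F. norm (M z - t *\<^sub>R z) \<le> D * norm z"
    using shift_bounded by blast
  have "e * \<bar>\<nu>\<bar> / D > 0"
    using \<open>e > 0\<close> \<open>\<nu> \<noteq> 0\<close> D by simp
  then obtain w where w: "w \<in> F" "norm w = 1" "norm (B w - \<nu> *\<^sub>R w) < e * \<bar>\<nu>\<bar> / D"
    using B unfolding approx_eigenvalue_def by blast
  define z where "z = B w - \<nu> *\<^sub>R w"
  have "z \<in> F"
    using BF w subspace by (simp add: z_def subspace_diff subspace_scale)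
  have "M z - t *\<^sub>R z = (M (B w) - t *\<^sub>R B w) - \<nu> *\<^sub>R (M w - t *\<^sub>R w)"
    using w BF subspace by (simp add: z_def diff scale subspace_scale algebra_simps)
  also have "\<dots> = (- \<nu>) *\<^sub>R (M w - (t + 1 / \<nu>) *\<^sub>R w)"
    using inv[OF w(1)] \<open>\<nu> \<noteq> 0\<close> by (simp add: algebra_simps)
  finally have "\<bar>\<nu>\<bar> * norm (M w - (t + 1 / \<nu>) *\<^sub>R w) = norm (M z - t *\<^sub>R z)"
    by simp
  also have "\<dots> \<le> D * norm z"
    using D \<open>z \<in> F\<close> by blast
  also have "\<dots> < e * \<bar>\<nu>\<bar>"
    using w(3) D by (simp add: z_def field_simps)
  finally have "norm (M w - (t + 1 / \<nu>) *\<^sub>R w) < e"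
    using \<open>\<nu> \<noteq> 0\<close> by (simp add: mult.commute)
  then show "\<exists>w\<in>F. norm w = 1 \<and> norm (M w - (t + 1 / \<nu>) *\<^sub>R w) < e"
    using w by blast
qed

text \<open>If the inequality failed at \<open>v\<close>, the numerical range of \<open>(M - t)\<inverse>\<close> would reach beyond
  \<open>1 / (b - t)\<close>, and its supremum \<open>\<nu>\<close> would put the point \<open>t + 1 / \<nu>\<close> of the gap into the
  spectrum of \<open>M\<close>.\<close>
lemma gap_inner_nonneg:
  assumes "t < b" and gap: "\<And>s. t \<le> s \<Longrightarrow> s < b \<Longrightarrow> s \<notin> spectrum_on F M" and "v \<in> F"
  shows "0 \<le> inner (M v - t *\<^sub>R v) (M v - b *\<^sub>R v)"
proof (rule ccontr)
  assume neg: "\<not> ?thesis"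
  obtain B where "bounded_symmetric_on F B"
    and B_left: "\<And>x. x \<in> F \<Longrightarrow> B (M x - t *\<^sub>R x) = x"
    and B_right: "\<And>x. x \<in> F \<Longrightarrow> M (B x) - t *\<^sub>R B x = x"
    using resolvent gap[of t] \<open>t < b\<close> by blast
  interpret B: bounded_symmetric_on F B by fact
  define w where "w = M v - t *\<^sub>R v"
  have "w \<in> F" "B w = v"
    using shift_closed B_left \<open>v \<in> F\<close> by (simp_all add: w_def)
  have "M v - b *\<^sub>R v = w - (b - t) *\<^sub>R B w"
    using \<open>B w = v\<close> by (simp add: w_def algebra_simps)
  then have "inner w (M v - b *\<^sub>R v) = (norm w)\<^sup>2 - (b - t) * inner (B w) w"
    by (simp add: power2_norm_eq_inner inner_diff_right inner_commute)
  moreover have "inner w (M v - b *\<^sub>R v) < 0"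
    using neg by (simp add: w_def)
  ultimately have "(norm w)\<^sup>2 < (b - t) * inner (B w) w"
    by linarith
  then have "w \<noteq> 0"
    using B.zero by auto
  define \<nu> where "\<nu> = numerical_sup F B"
  have "inner (B w) w \<le> \<nu> * (norm w)\<^sup>2"
    using B.inner_le_numerical_sup[OF \<open>w \<in> F\<close>] by (simp add: \<nu>_def)
  with \<open>(norm w)\<^sup>2 < (b - t) * inner (B w) w\<close> have "(norm w)\<^sup>2 < ((b - t) * \<nu>) * (norm w)\<^sup>2"
    using \<open>t < b\<close> by (smt (verit) mult_left_mono mult.assoc)
  then have "1 < (b - t) * \<nu>"
    using \<open>w \<noteq> 0\<close> by simp
  then have "\<nu> > 0"
    using \<open>t < b\<close> zero_less_mult_iff[of "b - t" \<nu>] by linarith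
  with \<open>1 < (b - t) * \<nu>\<close> have "t + 1 / \<nu> < b"
    by (simp add: field_simps)
  have "approx_eigenvalue F M (t + 1 / \<nu>)"
    using approx_eigenvalue_of_resolvent[OF B.maps_to B_right] B.approx_eigenvalue_numerical_sup
      \<open>w \<in> F\<close> \<open>w \<noteq> 0\<close> \<open>\<nu> > 0\<close> by (simp add: \<nu>_def)
  then have "t + 1 / \<nu> \<in> spectrum_on F M"
    using approx_eigenvalue_in_spectrum_on shift_closed by blast
  then show False
    using gap[of "t + 1 / \<nu>"] \<open>t + 1 / \<nu> < b\<close> \<open>\<nu> > 0\<close> by simp
qed

end

locale positive_contraction = bounded_symmetric_on F M
  for F :: "'a::{real_inner,complete_space} set" and M +
  assumes closed: "closed F"
    and nonneg: "x \<in> F \<Longrightarrow> 0 \<le> inner (M x) x"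
    and contraction: "x \<in> F \<Longrightarrow> norm (M x) \<le> norm x"
begin

lemma norm_sq_le_inner: "x \<in> F \<Longrightarrow> (norm (M x))\<^sup>2 \<le> inner (M x) x"
  using norm_sq_le_mult_inner[OF nonneg, of 1] contraction by simp

lemma inner_le_norm_sq: "x \<in> F \<Longrightarrow> inner (M x) x \<le> (norm x)\<^sup>2"
  using norm_cauchy_schwarz[of "M x" x] contraction[of x]
  by (smt (verit) mult_right_mono norm_ge_zero power2_eq_square)

lemma iterate_in: "y \<in> F \<Longrightarrow> (M ^^ k) y \<in> F"
  by (induction k) (auto simp: maps_to)

lemma inner_iterates:
  "y \<in> F \<Longrightarrow> inner ((M ^^ j) y) ((M ^^ k) y) = inner ((M ^^ (j + k)) y) y"
proof (induction j arbitrary: k)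
  case (Suc j)
  have "inner ((M ^^ Suc j) y) ((M ^^ k) y) = inner ((M ^^ j) y) (M ((M ^^ k) y))"
    using symmetric iterate_in Suc.prems by simp
  also have "\<dots> = inner ((M ^^ j) y) ((M ^^ Suc k) y)"
    by simp
  also have "\<dots> = inner ((M ^^ (j + Suc k)) y) y"
    by (rule Suc.IH[OF Suc.prems])
  finally show ?case
    by simp
qed (simp add: inner_commute)

lemma inner_iterate_even: "y \<in> F \<Longrightarrow> inner ((M ^^ (2 * k)) y) y = (norm ((M ^^ k) y))\<^sup>2"
  using inner_iterates[of y k k] by (simp add: power2_norm_eq_inner mult_2)

lemma inner_iterate_odd:
  "y \<in> F \<Longrightarrow> inner ((M ^^ (2 * k + 1)) y) y = inner (M ((M ^^ k) y)) ((M ^^ k) y)"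
  using inner_iterates[of y "Suc k" k] by (simp add: mult_2)

lemma inner_iterate_nonneg:
  assumes "y \<in> F"
  shows "0 \<le> inner ((M ^^ j) y) y"
proof (cases "even j")
  case True
  then obtain k where "j = 2 * k"
    by blast
  then show ?thesis
    using inner_iterate_even[OF assms] by simp
next
  case False
  then obtain k where "j = 2 * k + 1"
    using oddE by blast
  then show ?thesis
    using inner_iterate_odd[OF assms] nonneg iterate_in[OF assms] by simp
qed

lemma inner_iterate_decreasing:
  assumes "y \<in> F"
  shows "inner ((M ^^ Suc j) y) y \<le> inner ((M ^^ j) y) y"
proof (cases "even j")
  case True
  then obtain k where "j = 2 * k"
    by blast
  then show ?thesis
    using inner_iterate_odd[OF assms] inner_iterate_even[OF assms] inner_le_norm_sq
      iterate_in[OF assms] by simp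
next
  case False
  then obtain k where "j = 2 * k + 1"
    using oddE by blast
  moreover have "inner ((M ^^ (2 * k + 2)) y) y = (norm (M ((M ^^ k) y)))\<^sup>2"
    using inner_iterates[OF assms, of "Suc k" "Suc k"] by (simp add: power2_norm_eq_inner mult_2)
  ultimately show ?thesis
    using inner_iterate_odd[OF assms] norm_sq_le_inner iterate_in[OF assms] by simp
qed

text \<open>The numbers \<open>a j = \<langle>M\<^sup>j y, y\<rangle>\<close> decrease to a limit \<open>L\<close>, and
  \<open>\<parallel>M\<^sup>j y - M\<^sup>k y\<parallel>\<^sup>2 = a (2 j) - 2 a (j + k) + a (2 k)\<close>.\<close>
lemma iterates_Cauchy:
  assumes "y \<in> F"
  shows "Cauchy (\<lambda>k. (M ^^ k) y)"
proof (rule CauchyI)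
  define a where "a = (\<lambda>j. inner ((M ^^ j) y) y)"
  have "decseq a"
    unfolding a_def using inner_iterate_decreasing[OF assms] by (rule decseq_SucI)
  then obtain L where L: "a \<longlonglongrightarrow> L"
    using inner_iterate_nonneg[OF assms] by (metis a_def decseq_convergent)
  have dist_sq: "(norm ((M ^^ j) y - (M ^^ k) y))\<^sup>2
      = (a (j + j) - L) - 2 * (a (j + k) - L) + (a (k + k) - L)" for j k
    unfolding a_def power2_norm_eq_inner using inner_iterates[OF assms]
    by (simp add: inner_diff_left inner_diff_right inner_commute)
  fix e :: real assume "0 < e"
  then have "e\<^sup>2 / 4 > 0"
    by simp
  then obtain N where N: "\<forall>n\<ge>N. \<bar>a n - L\<bar> < e\<^sup>2 / 4"
    using LIMSEQ_D[OF L] unfolding real_norm_def by blast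
  show "\<exists>N. \<forall>m\<ge>N. \<forall>n\<ge>N. norm ((M ^^ m) y - (M ^^ n) y) < e"
  proof (intro exI allI impI)
    fix m n assume "N \<le> m" "N \<le> n"
    then have "\<bar>a (m + m) - L\<bar> < e\<^sup>2 / 4" "\<bar>a (m + n) - L\<bar> < e\<^sup>2 / 4"
      "\<bar>a (n + n) - L\<bar> < e\<^sup>2 / 4"
      using N by auto
    then have "(norm ((M ^^ m) y - (M ^^ n) y))\<^sup>2 < e\<^sup>2"
      unfolding dist_sq abs_less_iff by auto
    then show "norm ((M ^^ m) y - (M ^^ n) y) < e"
      using \<open>0 < e\<close> by (simp add: power_less_imp_less_base)
  qed
qed

lemma iterates_converge:
  assumes "y \<in> F"
  obtains z where "z \<in> F" "M z = z" "(\<lambda>k. (M ^^ k) y) \<longlonglongrightarrow> z"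
proof -
  define s where "s = (\<lambda>k. (M ^^ k) y)"
  obtain z where z: "s \<longlonglongrightarrow> z"
    using iterates_Cauchy[OF assms] by (auto simp: s_def Cauchy_convergent_iff convergent_def)
  have "z \<in> F"
    using closed_sequentially[OF closed _ z] iterate_in[OF assms] by (simp add: s_def)
  have "(\<lambda>k. M (s k) - M z) \<longlonglongrightarrow> 0"
  proof (rule Lim_null_comparison)
    show "\<forall>\<^sub>F k in sequentially. norm (M (s k) - M z) \<le> norm (s k - z)"
      using contraction diff iterate_in[OF assms] \<open>z \<in> F\<close> subspace
      by (simp add: s_def subspace_diff flip: diff)
    show "(\<lambda>k. norm (s k - z)) \<longlonglongrightarrow> 0"
      using z by (simp add: tendsto_norm_zero LIM_zero)
  qed
  then have "(\<lambda>k. s (Suc k)) \<longlonglongrightarrow> M z"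
    by (simp add: s_def LIM_zero_cancel)
  then have "M z = z"
    using LIMSEQ_unique LIMSEQ_Suc[OF z] by blast
  then show ?thesis
    using that \<open>z \<in> F\<close> z by (simp add: s_def)
qed

definition fixed_perp :: "'a set" where
  "fixed_perp = F \<inter> orthogonal_comp {x \<in> F. M x = x}"

lemma fixed_perp_subset: "fixed_perp \<subseteq> F"
  by (simp add: fixed_perp_def)

lemma closed_fixed_perp: "closed fixed_perp"
  unfolding fixed_perp_def by (intro closed_Int closed closed_orthogonal_comp)

lemma fixed_perp_bounded_symmetric: "bounded_symmetric_on fixed_perp M"
proof unfold_locales
  show "subspace fixed_perp"
    unfolding fixed_perp_def by (intro subspace_inter subspace subspace_orthogonal_comp)
  fix x assume x: "x \<in> fixed_perp"
  have "inner z (M x) = 0" if "z \<in> F" "M z = z" for z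
  proof -
    have "inner z (M x) = inner z x"
      using symmetric[of z x] x that fixed_perp_subset by auto
    also have "\<dots> = 0"
      using x that by (auto simp: fixed_perp_def orthogonal_comp_def orthogonal_def)
    finally show ?thesis .
  qed
  then show "M x \<in> fixed_perp"
    using x maps_to by (auto simp: fixed_perp_def orthogonal_comp_def orthogonal_def)
next
  show "\<exists>K. \<forall>x\<in>fixed_perp. norm (M x) \<le> K * norm x"
    using bounded fixed_perp_subset by blast
qed (use fixed_perp_subset add scale symmetric in \<open>auto simp: subset_iff\<close>)

lemma fixed_perp_fixed_eq_0: "z \<in> fixed_perp \<Longrightarrow> M z = z \<Longrightarrow> z = 0"
  by (auto simp: fixed_perp_def orthogonal_comp_def orthogonal_def)

lemma iterates_tendsto_0:
  assumes "y \<in> fixed_perp"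
  shows "(\<lambda>k. (M ^^ k) y) \<longlonglongrightarrow> 0"
proof -
  interpret W: bounded_symmetric_on fixed_perp M
    by (rule fixed_perp_bounded_symmetric)
  obtain z where "z \<in> F" "M z = z" and z: "(\<lambda>k. (M ^^ k) y) \<longlonglongrightarrow> z"
    using iterates_converge assms fixed_perp_subset by blast
  have "(M ^^ k) y \<in> fixed_perp" for k
    using assms W.maps_to by (induction k) auto
  then have "z \<in> fixed_perp"
    using closed_sequentially[OF closed_fixed_perp _ z] by blast
  then have "z = 0"
    using fixed_perp_fixed_eq_0 \<open>M z = z\<close> by blast
  then show ?thesis
    using z by simp
qed

lemma min_norm_solution_in_fixed_perp:
  assumes "x \<in> F" and min: "\<And>y. y \<in> F \<Longrightarrow> y - M y = x - M x \<Longrightarrow> norm x \<le> norm y"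
  shows "x \<in> fixed_perp"
proof -
  have "inner x z = 0" if "z \<in> F" "M z = z" for z
  proof (rule orthogonal_if_norm_le_norm_add_scaleR)
    fix r :: real
    have "x + r *\<^sub>R z \<in> F"
      using assms that subspace by (simp add: subspace_add subspace_scale)
    moreover have "M (x + r *\<^sub>R z) = M x + r *\<^sub>R z"
      using assms that subspace by (simp add: add scale subspace_scale)
    ultimately show "norm x \<le> norm (x + r *\<^sub>R z)"
      using min by simp
  qed
  then show ?thesis
    using assms by (auto simp: fixed_perp_def orthogonal_comp_def orthogonal_def inner_commute)
qed

end

text \<open>For the decrements \<open>d j = a j - a (j + 1)\<close> the hypotheses give \<open>d (2 k) \<le> t\<^sup>k d 0\<close>, hence
  \<open>a 0 = \<Sum> d j \<le> (1 + t) d 0 \<Sum> t\<^sup>k\<close>.\<close>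
lemma decrements_geometric_bound:
  fixes a :: "nat \<Rightarrow> real"
  assumes "0 \<le> t" "t < 1" and "decseq a" and lim: "(\<lambda>n. a (2 * n)) \<longlonglongrightarrow> 0"
    and odd: "\<And>k. a (2 * k + 1) - a (2 * k + 2) \<le> t * (a (2 * k) - a (2 * k + 1))"
    and even: "\<And>k. a (2 * k + 2) - a (2 * k + 3) \<le> a (2 * k + 1) - a (2 * k + 2)"
  shows "(1 - t) * a 0 \<le> (1 + t) * (a 0 - a 1)"
proof -
  define d where "d = (\<lambda>j. a j - a (Suc j))"
  have d_nonneg: "0 \<le> d j" for j
    using \<open>decseq a\<close> by (simp add: d_def decseq_Suc_iff)
  have d_even: "d (2 * k) \<le> t ^ k * d 0" for k
  proof (induction k)
    case (Suc k)
    have "d (2 * Suc k) \<le> t * d (2 * k)"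
      using even[of k] odd[of k] by (simp add: d_def numeral_eq_Suc)
    also have "\<dots> \<le> t * (t ^ k * d 0)"
      using Suc.IH \<open>0 \<le> t\<close> by (rule mult_left_mono)
    finally show ?case
      by simp
  qed simp
  have partial: "a 0 - a (2 * n) \<le> (1 + t) * d 0 / (1 - t)" for n
  proof -
    have "a 0 - a (2 * n) = (\<Sum>k<n. d (2 * k) + d (2 * k + 1))"
      using sum_lessThan_telescope'[of "\<lambda>k. a (2 * k)" n] by (simp add: d_def)
    also have "\<dots> \<le> (\<Sum>k<n. (1 + t) * d 0 * t ^ k)"
    proof (rule sum_mono)
      fix k
      have "d (2 * k + 1) \<le> t * d (2 * k)"
        using odd[of k] by (simp add: d_def)
      moreover have "(1 + t) * d (2 * k) \<le> (1 + t) * (t ^ k * d 0)"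
        using d_even[of k] \<open>0 \<le> t\<close> by (intro mult_left_mono) auto
      ultimately show "d (2 * k) + d (2 * k + 1) \<le> (1 + t) * d 0 * t ^ k"
        by (simp add: algebra_simps)
    qed
    also have "\<dots> = (1 + t) * d 0 * (1 - t ^ n) / (1 - t)"
      using \<open>t < 1\<close> by (simp add: sum_distrib_left[symmetric] sum_gp_strict)
    also have "\<dots> \<le> (1 + t) * d 0 / (1 - t)"
      by (intro divide_right_mono mult_left_le) (use \<open>0 \<le> t\<close> \<open>t < 1\<close> d_nonneg[of 0] in auto)
    finally show ?thesis .
  qed
  have "(\<lambda>n. a 0 - a (2 * n)) \<longlonglongrightarrow> a 0 - 0"
    by (intro tendsto_diff tendsto_const lim)
  then have "a 0 - 0 \<le> (1 + t) * d 0 / (1 - t)"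
    by (rule LIMSEQ_le_const2) (use partial in blast)
  then show ?thesis
    using \<open>t < 1\<close> by (simp add: d_def field_simps)
qed

locale spectral_gap = positive_contraction +
  fixes lam :: real
  assumes lam_nonneg: "0 \<le> lam" and lam_less_1: "lam < 1"
    and gap: "\<And>s. lam < s \<Longrightarrow> s < 1 \<Longrightarrow> s \<notin> spectrum_on F M"
begin

text \<open>The odd decrements of \<open>a j = \<langle>M\<^sup>j y, y\<rangle>\<close> are controlled by \<open>gap_inner_nonneg\<close> at \<open>M\<^sup>k y\<close>,
  the even ones by positivity at \<open>M\<^sup>k y - M\<^sup>k\<^sup>+\<^sup>1 y\<close>.\<close>
lemma inner_le_fixed_perp_above_gap:
  assumes "lam < t" "t < 1" and "y \<in> fixed_perp"
  shows "inner (M y) y \<le> (2 * t / (1 + t)) * (norm y)\<^sup>2"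
proof -
  have "y \<in> F"
    using assms fixed_perp_subset by blast
  define a where "a = (\<lambda>j. inner ((M ^^ j) y) y)"
  have a: "inner ((M ^^ i) y) ((M ^^ j) y) = a (i + j)" for i j
    unfolding a_def using inner_iterates[OF \<open>y \<in> F\<close>] .
  have "(1 - t) * a 0 \<le> (1 + t) * (a 0 - a 1)"
  proof (rule decrements_geometric_bound)
    show "decseq a"
      unfolding a_def using inner_iterate_decreasing[OF \<open>y \<in> F\<close>] by (rule decseq_SucI)
    have "(\<lambda>n. (norm ((M ^^ n) y))\<^sup>2) \<longlonglongrightarrow> 0"
      using tendsto_power[OF tendsto_norm[OF iterates_tendsto_0[OF assms(3)]], of 2] by simp
    then show "(\<lambda>n. a (2 * n)) \<longlonglongrightarrow> 0"
      using inner_iterate_even[OF \<open>y \<in> F\<close>] by (simp add: a_def)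
    fix k
    define v where "v = (M ^^ k) y"
    have "v \<in> F" "M v \<in> F"
      using iterate_in[OF \<open>y \<in> F\<close>] maps_to by (simp_all add: v_def)
    have vv: "inner v v = a (2 * k)" "inner (M v) v = a (2 * k + 1)" "inner v (M v) = a (2 * k + 1)"
      "inner (M v) (M v) = a (2 * k + 2)" "inner (M (M v)) v = a (2 * k + 2)"
      "inner (M (M v)) (M v) = a (2 * k + 3)"
      using a[of k k] a[of "Suc k" k] a[of k "Suc k"] a[of "Suc k" "Suc k"] a[of "Suc (Suc k)" k]
        a[of "Suc (Suc k)" "Suc k"]
      by (simp_all add: v_def mult_2 numeral_eq_Suc)
    have "0 \<le> inner (M v - t *\<^sub>R v) (M v - 1 *\<^sub>R v)"
      using gap_inner_nonneg[of t 1] gap assms \<open>v \<in> F\<close> by simp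
    then show "a (2 * k + 1) - a (2 * k + 2) \<le> t * (a (2 * k) - a (2 * k + 1))"
      by (simp add: vv inner_diff_left inner_diff_right algebra_simps)
    have "0 \<le> inner (M (v - M v)) (v - M v)"
      using nonneg \<open>v \<in> F\<close> \<open>M v \<in> F\<close> subspace by (simp add: subspace_diff)
    then show "a (2 * k + 2) - a (2 * k + 3) \<le> a (2 * k + 1) - a (2 * k + 2)"
      by (simp add: vv diff \<open>v \<in> F\<close> \<open>M v \<in> F\<close> inner_diff_left inner_diff_right)
  qed (use assms lam_nonneg in auto)
  moreover have "a 1 = inner (M y) y" "a 0 = (norm y)\<^sup>2"
    by (simp_all add: a_def power2_norm_eq_inner)
  ultimately show ?thesis
    using assms lam_nonneg by (simp add: field_simps)
qed

text \<open>The numerical range of \<open>M\<close> on \<open>fixed_perp\<close> stays below \<open>1\<close>; its supremum is an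
  approximate eigenvalue of \<open>M\<close>, so it cannot lie in the gap.\<close>
lemma inner_le_fixed_perp:
  assumes "y \<in> fixed_perp"
  shows "inner (M y) y \<le> lam * (norm y)\<^sup>2"
proof (cases "y = 0")
  case False
  interpret W: bounded_symmetric_on fixed_perp M
    by (rule fixed_perp_bounded_symmetric)
  define \<nu> where "\<nu> = numerical_sup fixed_perp M"
  define t where "t = (lam + 1) / 2"
  have t: "lam < t" "t < 1"
    using lam_less_1 by (auto simp: t_def)
  have "\<nu> \<le> 2 * t / (1 + t)"
    unfolding \<nu>_def numerical_sup_def
  proof (rule cSup_least)
    have "(1 / norm y) *\<^sub>R y \<in> fixed_perp"
      using assms W.subspace by (simp add: subspace_scale)
    then show "{inner (M w) w | w. w \<in> fixed_perp \<and> norm w = 1} \<noteq> {}"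
      using False by force
  qed (use inner_le_fixed_perp_above_gap[OF t] in force)
  also have "\<dots> < 1"
    using t lam_nonneg by (simp add: field_simps)
  finally have "\<nu> < 1" .
  have "\<nu> \<le> lam"
  proof (rule ccontr)
    assume "\<not> \<nu> \<le> lam"
    have "approx_eigenvalue F M \<nu>"
      using approx_eigenvalue_mono[OF fixed_perp_subset]
        W.approx_eigenvalue_numerical_sup[OF assms False] by (simp add: \<nu>_def)
    then have "\<nu> \<in> spectrum_on F M"
      using approx_eigenvalue_in_spectrum_on shift_closed by blast
    then show False
      using gap \<open>\<not> \<nu> \<le> lam\<close> \<open>\<nu> < 1\<close> by simp
  qed
  then show ?thesis
    using W.inner_le_numerical_sup[OF assms] by (simp add: \<nu>_def mult_right_mono order_trans)
qed simp

lemma norm_le_fixed_perp: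
  assumes "y \<in> fixed_perp"
  shows "norm (M y) \<le> lam * norm y"
proof (cases "M y = 0")
  case False
  interpret W: bounded_symmetric_on fixed_perp M
    by (rule fixed_perp_bounded_symmetric)
  have My: "M y \<in> fixed_perp"
    using W.maps_to assms .
  have "((norm (M y))\<^sup>2)\<^sup>2 = (inner (M y) (M y))\<^sup>2"
    by (simp add: power2_norm_eq_inner)
  also have "\<dots> \<le> inner (M y) y * inner (M (M y)) (M y)"
    using W.cauchy_schwarz[OF _ assms My] nonneg fixed_perp_subset by blast
  also have "\<dots> \<le> (lam * (norm y)\<^sup>2) * (lam * (norm (M y))\<^sup>2)"
    using inner_le_fixed_perp[OF assms] inner_le_fixed_perp[OF My] nonneg assms My
      fixed_perp_subset lam_nonneg by (intro mult_mono) auto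
  finally have "(norm (M y))\<^sup>2 * (norm (M y))\<^sup>2 \<le> (lam * norm y)\<^sup>2 * (norm (M y))\<^sup>2"
    by (simp add: power2_eq_square algebra_simps)
  moreover have "(norm (M y))\<^sup>2 > 0"
    using False by simp
  ultimately have "(norm (M y))\<^sup>2 \<le> (lam * norm y)\<^sup>2"
    by (rule mult_right_le_imp_le)
  then show ?thesis
    using lam_nonneg by (auto intro: power2_le_imp_le)
qed (simp add: lam_nonneg)

lemma norm_iterate_le_fixed_perp:
  assumes "y \<in> fixed_perp"
  shows "norm ((M ^^ m) y) \<le> lam ^ m * norm y"
proof (induction m)
  case (Suc m)
  have "(M ^^ m) y \<in> fixed_perp"
    using assms bounded_symmetric_on.maps_to[OF fixed_perp_bounded_symmetric] by (induction m) auto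
  then have "norm ((M ^^ Suc m) y) \<le> lam * norm ((M ^^ m) y)"
    using norm_le_fixed_perp by simp
  also have "\<dots> \<le> lam * (lam ^ m * norm y)"
    using Suc.IH lam_nonneg by (rule mult_left_mono)
  finally show ?case
    by simp
qed simp

end

lemma spectrum_on_proj_proj_le_1:
  fixes S T :: "'a::{real_inner,complete_space} set"
  assumes "closed_subspace S" "closed_subspace T"
    and "l \<in> spectrum_on S (\<lambda>x. orth_proj S (orth_proj T x))"
  shows "l \<le> 1"
proof (rule ccontr)
  interpret S: orth_projector S by (rule orth_projector.intro) fact
  interpret T: orth_projector T by (rule orth_projector.intro) fact
  assume "\<not> l \<le> 1"
  have "l \<notin> spectrum_on S (\<lambda>x. orth_proj S (orth_proj T x))"
  proof (rule notin_spectrum_on_gt_1[OF assms(1)])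
    show "linear (\<lambda>x. orth_proj S (orth_proj T x))"
      using linear_compose[OF T.linear S.linear] by (simp add: o_def)
    show "norm (orth_proj S (orth_proj T x)) \<le> norm x" for x
      by (rule order_trans[OF S.norm_le T.norm_le])
  qed (use S.in_subspace \<open>\<not> l \<le> 1\<close> in auto)
  then show False
    using assms(3) by contradiction
qed

text \<open>Every \<open>\<sigma> \<in> (0, cos\<^sup>2 \<theta>\<^sub>m\<^sub>a\<^sub>x)\<close> misses one of the two spectra: otherwise \<open>arccos (sqrt \<sigma>)\<close>
  would be an angle in \<open>\<Theta>(S, T)\<close> larger than \<open>\<theta>\<^sub>m\<^sub>a\<^sub>x\<close>. Arguments of \<open>arccos\<close> beyond \<open>1\<close> are
  excluded by the previous lemma.\<close>
lemma notin_spectrum_on_below_cos_theta_max: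
  fixes S T :: "'a::{real_inner,complete_space} set"
  assumes "closed_subspace S" "closed_subspace T"
    and "cos (theta_max S T) > 0" "0 < \<sigma>" "\<sigma> < (cos (theta_max S T))\<^sup>2"
  shows "\<sigma> \<notin> spectrum_on S (\<lambda>x. orth_proj S (orth_proj T x))
    \<or> \<sigma> \<notin> spectrum_on T (\<lambda>x. orth_proj T (orth_proj S x))"
proof (rule ccontr)
  assume "\<not> ?thesis"
  then have in_spec: "\<sigma> \<in> spectrum_on S (\<lambda>x. orth_proj S (orth_proj T x))"
    "\<sigma> \<in> spectrum_on T (\<lambda>x. orth_proj T (orth_proj S x))"
    by auto
  define s where "s = sqrt \<sigma>"
  have "(cos (theta_max S T))\<^sup>2 \<le> 1"
    by (simp add: abs_square_le_1)
  then have s: "0 < s" "s < 1" "s\<^sup>2 = \<sigma>"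
    using assms(4,5) by (auto simp: s_def)
  define X where "X = Theta S T - {pi / 2}"
  have "arccos s \<noteq> pi / 2"
    using s cos_arccos[of s] cos_pi_half by force
  then have "arccos s \<in> X"
    using s in_spec by (auto simp: X_def Theta_def hatTheta_def)
  have X_bounds: "0 \<le> x \<and> x \<le> pi" if "x \<in> X" for x
  proof -
    obtain s' where s': "x = arccos s'" "s' \<ge> 0"
      "s'\<^sup>2 \<in> spectrum_on S (\<lambda>x. orth_proj S (orth_proj T x))"
      using \<open>x \<in> X\<close> unfolding X_def Theta_def hatTheta_def by blast
    then have "s'\<^sup>2 \<le> 1"
      using spectrum_on_proj_proj_le_1[OF assms(1,2)] by blast
    then have "s' \<le> 1"
      using \<open>s' \<ge> 0\<close> by (simp add: abs_square_le_1)
    then show ?thesis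
      using s' by (simp add: arccos_lbound arccos_ubound)
  qed
  have "X \<noteq> {}" "bdd_above X"
    using \<open>arccos s \<in> X\<close> X_bounds by (auto intro: bdd_aboveI[of _ pi])
  then have "theta_max S T = Sup X" "arccos s \<le> Sup X" "Sup X \<le> pi"
    using cSup_upper[OF \<open>arccos s \<in> X\<close>] cSup_least[of X pi] X_bounds
    unfolding theta_max_def X_def[symmetric] Let_def by auto
  moreover have "0 \<le> arccos s" "arccos s \<le> pi"
    using X_bounds[OF \<open>arccos s \<in> X\<close>] by auto
  ultimately have "cos (theta_max S T) \<le> cos (arccos s)"
    by (subst cos_mono_le_eq) auto
  then have "cos (theta_max S T) \<le> s"
    using s by simp
  then have "(cos (theta_max S T))\<^sup>2 \<le> \<sigma>"
    using power_mono[of "cos (theta_max S T)" s 2] assms(3) s by simp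
  then show False
    using assms(5) by simp
qed

locale subspace_pair =
  fixes S T :: "'a::{real_inner,complete_space} set"
  assumes closed_subspace_S: "closed_subspace S" and closed_subspace_T: "closed_subspace T"
begin

sublocale S: orth_projector S
  by (rule orth_projector.intro[OF closed_subspace_S])

sublocale T: orth_projector T
  by (rule orth_projector.intro[OF closed_subspace_T])

text \<open>On \<open>S\<^sup>\<bottom>\<close> this is the iteration operator \<open>I - K = S\<^sup>\<bottom> T\<close>.\<close>
definition iter_op :: "'a \<Rightarrow> 'a" where
  "iter_op x = orth_proj T x - orth_proj S (orth_proj T x)"

lemma bounded_linear_iter_op: "bounded_linear iter_op"
  using bounded_linear_compose[OF S.bounded_linear_residual T.bounded_linear]
  by (simp add: iter_op_def[abs_def])

lemma residual_residual_eq_iter_op: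
  "y \<in> orthogonal_comp S \<Longrightarrow>
    (y - orth_proj T y) - orth_proj S (y - orth_proj T y) = y - iter_op y"
  by (simp add: iter_op_def S.diff S.eq_0)

lemma iter_op_inner: "y \<in> orthogonal_comp S \<Longrightarrow> inner (iter_op x) y = inner (orth_proj T x) y"
  using S.self_adjoint[of "orth_proj T x" y] S.eq_0[of y] by (simp add: iter_op_def inner_diff_left)

lemma positive_contraction_iter_op: "positive_contraction (orthogonal_comp S) iter_op"
proof unfold_locales
  interpret A: bounded_linear iter_op
    by (rule bounded_linear_iter_op)
  fix x y assume x: "x \<in> orthogonal_comp S"
  show "iter_op x \<in> orthogonal_comp S"
    by (simp add: iter_op_def S.residual_orthogonal)
  show "0 \<le> inner (iter_op x) x"
    using iter_op_inner[OF x] by (simp add: T.inner_self)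
  show "norm (iter_op x) \<le> norm x"
    using S.norm_residual_le T.norm_le order_trans by (metis iter_op_def)
  assume y: "y \<in> orthogonal_comp S"
  show "inner (iter_op x) y = inner x (iter_op y)"
    using iter_op_inner[OF x] iter_op_inner[OF y] T.self_adjoint by (simp add: inner_commute)
  show "iter_op (x + y) = iter_op x + iter_op y"
    by (rule A.add)
next
  show "iter_op (c *\<^sub>R x) = c *\<^sub>R iter_op x" for c x
    using linear_scale[OF bounded_linear.linear[OF bounded_linear_iter_op]] .
  show "\<exists>K. \<forall>x\<in>orthogonal_comp S. norm (iter_op x) \<le> K * norm x"
    using bounded_linear.bounded[OF bounded_linear_iter_op] by (metis mult.commute)
qed (simp_all add: subspace_orthogonal_comp closed_orthogonal_comp)

text \<open>The chain of Jacobson's lemma and spectral shifts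
  \<open>S T S \<leadsto> S(I-T)S \<leadsto> T\<^sup>\<bottom> S T\<^sup>\<bottom> \<leadsto> T\<^sup>\<bottom> S\<^sup>\<bottom> T\<^sup>\<bottom> \<leadsto> S\<^sup>\<bottom> T\<^sup>\<bottom> S\<^sup>\<bottom> \<leadsto> S\<^sup>\<bottom> T S\<^sup>\<bottom>\<close>.\<close>
lemma notin_spectrum_on_iter_op:
  assumes "0 < \<sigma>" "\<sigma> < 1"
    and "\<sigma> \<notin> spectrum_on S (\<lambda>x. orth_proj S (orth_proj T x))
      \<or> \<sigma> \<notin> spectrum_on T (\<lambda>x. orth_proj T (orth_proj S x))"
  shows "1 - \<sigma> \<notin> spectrum_on (orthogonal_comp S) iter_op"
proof -
  have "\<sigma> \<notin> spectrum_on S (\<lambda>x. orth_proj S (orth_proj T x))"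
  proof (cases "\<sigma> \<notin> spectrum_on S (\<lambda>x. orth_proj S (orth_proj T x))")
    case False
    then have "\<sigma> \<notin> spectrum_on T (\<lambda>x. orth_proj T (orth_proj S x))"
      using assms(3) by blast
    then show ?thesis
      using notin_spectrum_on_swap[OF S.subspace S.in_subspace T.in_subspace S.bounded_linear
          T.bounded_linear] assms(1) by simp
  qed
  from notin_spectrum_on_one_minus[OF S.subspace this]
  have "1 - \<sigma> \<notin> spectrum_on S (\<lambda>x. orth_proj S (x - orth_proj T x))"
    by (rule notin_spectrum_on_cong[rotated]) (simp add: S.diff S.eq_self)
  then have "1 - \<sigma> \<notin> spectrum_on (orthogonal_comp T)
      (\<lambda>u. orth_proj S u - orth_proj T (orth_proj S u))"
    using notin_spectrum_on_swap[OF subspace_orthogonal_comp T.residual_orthogonal S.in_subspace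
        T.bounded_linear_residual S.bounded_linear] assms(2) by simp
  from notin_spectrum_on_one_minus[OF subspace_orthogonal_comp this]
  have "\<sigma> \<notin> spectrum_on (orthogonal_comp T)
      (\<lambda>u. u - (orth_proj S u - orth_proj T (orth_proj S u)))"
    by simp
  then have "\<sigma> \<notin> spectrum_on (orthogonal_comp T)
      (\<lambda>u. (u - orth_proj S u) - orth_proj T (u - orth_proj S u))"
    by (rule notin_spectrum_on_cong[rotated]) (simp add: T.diff T.eq_0)
  then have "\<sigma> \<notin> spectrum_on (orthogonal_comp S)
      (\<lambda>u. (u - orth_proj T u) - orth_proj S (u - orth_proj T u))"
    using notin_spectrum_on_swap[OF subspace_orthogonal_comp S.residual_orthogonal
        T.residual_orthogonal S.bounded_linear_residual T.bounded_linear_residual] assms(1) by simp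
  from notin_spectrum_on_one_minus[OF subspace_orthogonal_comp this]
  show ?thesis
    by (rule notin_spectrum_on_cong[rotated]) (simp add: residual_residual_eq_iter_op)
qed

lemma spectral_gap_iter_op:
  assumes "cos (theta_max S T) > 0"
  shows "spectral_gap (orthogonal_comp S) iter_op (1 - (cos (theta_max S T))\<^sup>2)"
proof -
  interpret positive_contraction "orthogonal_comp S" iter_op
    by (rule positive_contraction_iter_op)
  have "(cos (theta_max S T))\<^sup>2 \<le> 1"
    by (simp add: abs_square_le_1)
  moreover have "s \<notin> spectrum_on (orthogonal_comp S) iter_op"
    if "1 - (cos (theta_max S T))\<^sup>2 < s" "s < 1" for s
    using notin_spectrum_on_iter_op[of "1 - s"] notin_spectrum_on_below_cos_theta_max[of S T "1 - s"]
      closed_subspace_S closed_subspace_T assms that calculation by auto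
  ultimately show ?thesis
    using assms by unfold_locales auto
qed

end

theorem mainTheorem14:
  fixes S T :: "'a::{real_inner, complete_space} set"
    and f xstar :: 'a and x :: "nat \<Rightarrow> 'a"
  assumes "closed_subspace S" and "closed_subspace T"
    and "cos (theta_max S T) > 0"
  defines "P \<equiv> orth_proj S" and "Q \<equiv> orth_proj T"
  defines "Pp \<equiv> (\<lambda>y. y - P y)" and "Qp \<equiv> (\<lambda>y. y - Q y)"
  defines "b \<equiv> - Pp (Qp (P f))" and "K \<equiv> (\<lambda>y. Pp (Qp y))"
  assumes "xstar \<in> orthogonal_comp S" and "K xstar = b"
    and "\<forall>y \<in> orthogonal_comp S. K y = b \<longrightarrow> norm xstar \<le> norm y"
    and "x 0 = 0" and "\<And>m. x (Suc m) = (x m - K (x m)) + b"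
  shows "\<forall>m. norm (x m - xstar) \<le> (1 - (cos (theta_max S T))\<^sup>2) ^ m * norm xstar"
proof
  fix m
  interpret subspace_pair S T
    using assms(1,2) by unfold_locales
  interpret spectral_gap "orthogonal_comp S" iter_op "1 - (cos (theta_max S T))\<^sup>2"
    using spectral_gap_iter_op assms(3) .
  have K_diff: "K (u - v) = K u - K v" for u v
    by (simp add: K_def Pp_def Qp_def P_def Q_def S.diff T.diff)
  have K_eq: "K y = y - iter_op y" if "y \<in> orthogonal_comp S" for y
    using residual_residual_eq_iter_op[OF that] by (simp add: K_def Pp_def Qp_def P_def Q_def)
  have "x m - xstar = (iter_op ^^ m) (- xstar)"
  proof (induction m)
    case (Suc m)
    have "x (Suc m) - xstar = (x m - xstar) - K (x m - xstar)"
      using assms(11,14) by (simp add: K_diff algebra_simps)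
    also have "\<dots> = iter_op (x m - xstar)"
      using Suc iterate_in subspace_neg[OF subspace assms(10)] K_eq by simp
    finally show ?case
      using Suc by simp
  qed (simp add: assms(13))
  moreover have "- xstar \<in> fixed_perp"
  proof -
    have "xstar \<in> fixed_perp"
      using assms(10,11,12) K_eq by (intro min_norm_solution_in_fixed_perp) auto
    then show ?thesis
      using bounded_symmetric_on.subspace[OF fixed_perp_bounded_symmetric] by (simp add: subspace_neg)
  qed
  ultimately show "norm (x m - xstar) \<le> (1 - (cos (theta_max S T))\<^sup>2) ^ m * norm xstar"
    using norm_iterate_le_fixed_perp[of "- xstar" m] by simp
qed

end
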